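(* Let $D$ be a CAEXT derivation ending in a configuration $C\neq\mathsf{unsat}$. Then in $C$, for all array terms $a$ and propagated terms $t$: (i) if $C$ is obtained by applying a non-conflict rule to a configuration $C'$ and $\mathcal R(a,t)\neq()$ in $C'$, then both $\mathcal R(a,t)$ and its depth $|\mathcal R(a,t)|$ are the same in $C$ as in $C'$; (ii) $\mathcal R(a,t)$ is well defined (its defining recursion terminates); (iii) $|\mathcal R(a,t)|$ is finite; (iv) $\mathcal R(a,t)=()$ if and only if $\pi(a,t)=()$.
   Context: Theory. Many-sorted first-order logic with equality. There is an index sort $\sigma$, an element sort $\tau$, and an array sort $(\sigma\to\tau)$, with function symbols: read $a[i]$, write $a\langle i\triangleleft u\rangle$, and constant array $\langle v\rangle$. The empty theory treats all these symbols (and the array sort) as uninterpreted. $T(A)$ is the set of terms occurring in $A$, $T_{\mathcal A}(A)$ the set of array terms in $A$, and $W(A)=\{a\langle i\triangleleft u\rangle[i]\approx u \mid a\langle i\triangleleft u\rangle\in T(A)\}$. Configurations. A configuration is either $\mathsf{unsat}$ or a triple $\langle A,\mathcal I,\pi\rangle$ where $A$ is a set of formulas (with flat literals), $\mathcal I$ is either $\mathcal I_0=\mathsf{none}$ or an interpretation in the empty theory satisfying $A$, and $\pi$ maps pairs $(a,t)$ ($a$ an array term, $t$ a read term $b[i]$ or a constant array term $\langle v\rangle$) to either the undefined value $()$ or a pair $(r,c)$ with $r$ a formula and $c$ an array term. $\pi_0$ maps every pair to $()$; the initial configuration for $A$ is $\langle A,\mathcal I_0,\pi_0\rangle$. Reasons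 and depth. $\mathcal R(a,t)=()$ if $\pi(a,t)=()$; otherwise $\mathcal R(a,t)=\top$ if $t=a$ or $t=a[i]$ for some $i$; otherwise $\mathcal R(a,t)=\mathcal R(c,t)\wedge r$ where $\pi(a,t)=(r,c)$. Correspondingly $|\mathcal R(a,t)|=0$ if $\pi(a,t)=()$, $=1$ if $t=a$ or $t=a[i]$, and $=1+|\mathcal R(c,t)|$ otherwise, where $\pi(a,t)=(r,c)$. Updated indices $I(a,\langle v\rangle)$: $()$ if $\pi(a,\langle v\rangle)=()$; $\emptyset$ if $a=\langle v\rangle$; $I(b,\langle v\rangle)\cup\{j\}$ if $\pi(a,\langle v\rangle)=(\top,b)$ with $b=a\langle j\triangleleft u\rangle$ or $a=b\langle j\triangleleft u\rangle$; otherwise $I(c,\langle v\rangle)$ where $\pi(a,\langle v\rangle)=(r,c)$. "$\mathcal I\models\varphi$" refers to the current $\mathcal I$ (empty theory); such premises require $\mathcal I\ne\mathcal I_0$. "Reset" means $(\mathcal I,\pi):=(\mathcal I_0,\pi_0)$. Rules of CAEXT: Interp: if $\mathcal I=\mathcal I_0$ and $\mathcal I'\models A\cup W(A)$ in the empty theory, set $\mathcal I:=\mathcal I'$. Conf: if $A\cup W(A)$ is empty-theory unsatisfiable, derive $\mathsf{unsat}$. InitR: $a[i]\in T(A)$ ⟹ $\pi(a,a[i]):=(\top,a)$. InitW: $s=a\langle i\triangleleft u\rangle\in T(A)$ ⟹ $\pi(s,s[i]):=(\top,s)$. RowD: $\mathcal I\models i\not\approx j$, $\pi(a\langle j\triangleleft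 u\rangle,b[i])\ne()$, $\pi(a,b[i])=()$ ⟹ $\pi(a,b[i]):=(i\not\approx j,a\langle j\triangleleft u\rangle)$. RowU: $\mathcal I\models i\not\approx j$, $a\langle j\triangleleft u\rangle\in T(A)$, $\pi(a,b[i])\ne()$, $\pi(a\langle j\triangleleft u\rangle,b[i])=()$ ⟹ $\pi(a\langle j\triangleleft u\rangle,b[i]):=(i\not\approx j,a)$. EqR: $\mathcal I\models a\approx c$, $a,c\in T_{\mathcal A}(A)$, $a\approx c\in T(A)$, $\pi(a,b[i])\ne()$, $\pi(c,b[i])=()$ ⟹ $\pi(c,b[i]):=(a\approx c,a)$. EqL: symmetric, $\pi(a,b[i]):=(a\approx c,c)$. CongR: $\mathcal I\models i\approx k$, $\pi(a,b[i])\ne()$, $\pi(a,c[k])\ne()$, $\mathcal I\models b[i]\not\approx c[k]$ ⟹ add $\mathcal R(a,b[i])\wedge\mathcal R(a,c[k])\wedge i\approx k\Rightarrow b[i]\approx c[k]$ to $A$, reset. DisEq: $\mathcal I\models a\not\approx c$, $a,c\in T_{\mathcal A}(A)$, $a\approx c\in T(A)$, $k_{\{a,c\}}\notin T(A)$ ⟹ add $a\not\approx c\Rightarrow a[k_{\{a,c\}}]\not\approx c[k_{\{a,c\}}]$ (fresh index constant $k_{\{a,c\}}$), reset. Roc: $\pi(\langle v\rangle,b[i])\ne()$, $\mathcal I\models b[i]\not\approx v$ ⟹ add $\mathcal R(\langle v\rangle,b[i])\Rightarrow b[i]\approx v$, reset. InitC: $\langle v\rangle\in T(A)$ ⟹ $\pi(\langle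 v\rangle,\langle v\rangle):=(\top,\langle v\rangle)$. CowD: $\pi(a\langle j\triangleleft u\rangle,\langle v\rangle)\ne()$, $\pi(a,\langle v\rangle)=()$, $\mathcal I\models\exists i{:}\sigma.\bigwedge_{k\in I(a\langle j\triangleleft u\rangle,\langle v\rangle)\cup\{j\}}i\not\approx k$ ⟹ $\pi(a,\langle v\rangle):=(\top,a\langle j\triangleleft u\rangle)$. CowU: $\pi(a,\langle v\rangle)\ne()$, $\pi(a\langle j\triangleleft u\rangle,\langle v\rangle)=()$, $a\langle j\triangleleft u\rangle\in T(A)$, $\mathcal I\models\exists i{:}\sigma.\bigwedge_{k\in I(a,\langle v\rangle)\cup\{j\}}i\not\approx k$ ⟹ $\pi(a\langle j\triangleleft u\rangle,\langle v\rangle):=(\top,a)$. CEqR: $\mathcal I\models a\approx c$, $a,c\in T_{\mathcal A}(A)$, $a\approx c\in T(A)$, $\pi(a,\langle v\rangle)\ne()$, $\pi(c,\langle v\rangle)=()$ ⟹ $\pi(c,\langle v\rangle):=(a\approx c,a)$. CEqL: symmetric, $\pi(a,\langle v\rangle):=(a\approx c,c)$. CongC: $\pi(a,\langle v\rangle)\ne()$, $\pi(a,\langle w\rangle)\ne()$, $\mathcal I\models v\not\approx w$, $\mathcal I\models\exists i{:}\sigma.\bigwedge_{k\in I(a,\langle v\rangle)\cup I(a,\langle w\rangle)}i\not\approx k$ ⟹ add $\mathcal R(a,\langle v\rangle)\wedge\mathcal R(a,\langle w\rangle)\wedge\exists i{:}\sigma.\bigwedge_{k\in I(a,\langle v\rangle)\cup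 I(a,\langle w\rangle)}i\not\approx k\Rightarrow v\approx w$, reset. Conflict rules: CongR, DisEq, Roc, CongC; all other rules are non-conflict rules. A derivation is a sequence of configurations starting from an initial configuration, each obtained from the previous by a rule application. *)

theory Defs
  imports Main "HOL-Library.FSet"
begin

datatype sort = Idx | Elem | Arr

text \<open>Const: uninterpreted constants of a given sort; Var: variables (only used
 bound under the index quantifier in CongC lemmas); K X: the fresh index constant
 k_{a,c} attached to the unordered pair X = {a,c}; Read a i = a[i];
 Write a i u = a<i <| u>; CArr v = constant array <v>.\<close>
datatype trm =
    Const string sort
  | Var nat sort
  | K "trm fset"
  | Read trm trm
  | Write trm trm trm
  | CArr trm

datatype fml =
    Top
  | Bot
  | Eq trm trm
  | Neg fml
  | Conj fml fml
  | Disj fml fml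
  | Imp fml fml
  | Ex nat sort fml

fun sort_of :: "trm \<Rightarrow> sort option" where
  "sort_of (Const n s) = Some s"
| "sort_of (Var n s) = Some s"
| "sort_of (K X) = Some Idx"
| "sort_of (Read b i) =
     (if sort_of b = Some Arr \<and> sort_of i = Some Idx then Some Elem else None)"
| "sort_of (Write a i u) =
     (if sort_of a = Some Arr \<and> sort_of i = Some Idx \<and> sort_of u = Some Elem
      then Some Arr else None)"
| "sort_of (CArr v) = (if sort_of v = Some Elem then Some Arr else None)"

fun wellsorted :: "fml \<Rightarrow> bool" where
  "wellsorted Top = True"
| "wellsorted Bot = True"
| "wellsorted (Eq s t) = (sort_of s \<noteq> None \<and> sort_of s = sort_of t)"
| "wellsorted (Neg f) = wellsorted f"
| "wellsorted (Conj f g) = (wellsorted f \<and> wellsorted g)"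
| "wellsorted (Disj f g) = (wellsorted f \<and> wellsorted g)"
| "wellsorted (Imp f g) = (wellsorted f \<and> wellsorted g)"
| "wellsorted (Ex n s f) = wellsorted f"

text \<open>Subterms. K X is a constant symbol, so it has no proper subterms.\<close>
fun subterms :: "trm \<Rightarrow> trm set" where
  "subterms (Const n s) = {Const n s}"
| "subterms (Var n s) = {Var n s}"
| "subterms (K X) = {K X}"
| "subterms (Read b i) = insert (Read b i) (subterms b \<union> subterms i)"
| "subterms (Write a i u) = insert (Write a i u) (subterms a \<union> subterms i \<union> subterms u)"
| "subterms (CArr v) = insert (CArr v) (subterms v)"

fun fml_terms :: "fml \<Rightarrow> trm set" where
  "fml_terms Top = {}"
| "fml_terms Bot = {}"
| "fml_terms (Eq s t) = subterms s \<union> subterms t"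
| "fml_terms (Neg f) = fml_terms f"
| "fml_terms (Conj f g) = fml_terms f \<union> fml_terms g"
| "fml_terms (Disj f g) = fml_terms f \<union> fml_terms g"
| "fml_terms (Imp f g) = fml_terms f \<union> fml_terms g"
| "fml_terms (Ex n s f) = fml_terms f"

text \<open>Equality atoms occurring in a formula (equalities are themselves terms of the
 formula, so "a = c in T(A)" means that the atom a = c occurs in A).\<close>
fun fml_atoms :: "fml \<Rightarrow> fml set" where
  "fml_atoms Top = {}"
| "fml_atoms Bot = {}"
| "fml_atoms (Eq s t) = {Eq s t}"
| "fml_atoms (Neg f) = fml_atoms f"
| "fml_atoms (Conj f g) = fml_atoms f \<union> fml_atoms g"
| "fml_atoms (Disj f g) = fml_atoms f \<union> fml_atoms g"
| "fml_atoms (Imp f g) = fml_atoms f \<union> fml_atoms g"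
| "fml_atoms (Ex n s f) = fml_atoms f"

fun quantifier_free :: "fml \<Rightarrow> bool" where
  "quantifier_free (Ex n s f) = False"
| "quantifier_free (Neg f) = quantifier_free f"
| "quantifier_free (Conj f g) = (quantifier_free f \<and> quantifier_free g)"
| "quantifier_free (Disj f g) = (quantifier_free f \<and> quantifier_free g)"
| "quantifier_free (Imp f g) = (quantifier_free f \<and> quantifier_free g)"
| "quantifier_free _ = True"

definition T :: "fml set \<Rightarrow> trm set" where
  "T A = (\<Union>f\<in>A. fml_terms f)"

definition TA :: "fml set \<Rightarrow> trm set" where
  "TA A = {t \<in> T A. sort_of t = Some Arr}"

definition atoms :: "fml set \<Rightarrow> fml set" where
  "atoms A = (\<Union>f\<in>A. fml_atoms f)"

definition W :: "fml set \<Rightarrow> fml set" where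
  "W A = {Eq (Read (Write a i u) i) u | a i u. Write a i u \<in> T A}"

fun is_cst :: "trm \<Rightarrow> bool" where
  "is_cst (Const n s) = True"
| "is_cst (K X) = True"
| "is_cst _ = False"

fun flat_trm :: "trm \<Rightarrow> bool" where
  "flat_trm (Read b i) = (is_cst b \<and> is_cst i)"
| "flat_trm (Write a i u) = (is_cst a \<and> is_cst i \<and> is_cst u)"
| "flat_trm (CArr v) = is_cst v"
| "flat_trm t = is_cst t"

definition flat_literals :: "fml \<Rightarrow> bool" where
  "flat_literals f = (\<forall>s t. Eq s t \<in> fml_atoms f \<longrightarrow>
      (is_cst s \<and> flat_trm t) \<or> (flat_trm s \<and> is_cst t))"

section \<open>Semantics in the empty theory (all symbols uninterpreted)\<close>

record 'u interp =
  dom :: "sort \<Rightarrow> 'u set"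
  cnst :: "string \<Rightarrow> sort \<Rightarrow> 'u"
  kc :: "trm fset \<Rightarrow> 'u"
  rd :: "'u \<Rightarrow> 'u \<Rightarrow> 'u"
  wr :: "'u \<Rightarrow> 'u \<Rightarrow> 'u \<Rightarrow> 'u"
  ca :: "'u \<Rightarrow> 'u"

definition wf_interp :: "'u interp \<Rightarrow> bool" where
  "wf_interp I \<longleftrightarrow>
     (\<forall>s. dom I s \<noteq> {}) \<and>
     (\<forall>n s. cnst I n s \<in> dom I s) \<and>
     (\<forall>X. kc I X \<in> dom I Idx) \<and>
     (\<forall>a\<in>dom I Arr. \<forall>i\<in>dom I Idx. rd I a i \<in> dom I Elem) \<and>
     (\<forall>a\<in>dom I Arr. \<forall>i\<in>dom I Idx. \<forall>u\<in>dom I Elem. wr I a i u \<in> dom I Arr) \<and>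
     (\<forall>v\<in>dom I Elem. ca I v \<in> dom I Arr)"

fun eval :: "'u interp \<Rightarrow> (nat \<Rightarrow> 'u) \<Rightarrow> trm \<Rightarrow> 'u" where
  "eval I \<nu> (Const n s) = cnst I n s"
| "eval I \<nu> (Var n s) = \<nu> n"
| "eval I \<nu> (K X) = kc I X"
| "eval I \<nu> (Read b i) = rd I (eval I \<nu> b) (eval I \<nu> i)"
| "eval I \<nu> (Write a i u) = wr I (eval I \<nu> a) (eval I \<nu> i) (eval I \<nu> u)"
| "eval I \<nu> (CArr v) = ca I (eval I \<nu> v)"

fun sat :: "'u interp \<Rightarrow> (nat \<Rightarrow> 'u) \<Rightarrow> fml \<Rightarrow> bool" where
  "sat I \<nu> Top = True"
| "sat I \<nu> Bot = False"
| "sat I \<nu> (Eq s t) = (eval I \<nu> s = eval I \<nu> t)"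
| "sat I \<nu> (Neg f) = (\<not> sat I \<nu> f)"
| "sat I \<nu> (Conj f g) = (sat I \<nu> f \<and> sat I \<nu> g)"
| "sat I \<nu> (Disj f g) = (sat I \<nu> f \<or> sat I \<nu> g)"
| "sat I \<nu> (Imp f g) = (sat I \<nu> f \<longrightarrow> sat I \<nu> g)"
| "sat I \<nu> (Ex n s f) = (\<exists>x\<in>dom I s. sat I (\<nu>(n := x)) f)"

text \<open>I |= phi (formulas are closed, so the valuation is irrelevant).\<close>
definition holds :: "'u interp \<Rightarrow> fml \<Rightarrow> bool" where
  "holds I f \<longleftrightarrow> (\<forall>\<nu>. sat I \<nu> f)"

definition models :: "'u interp \<Rightarrow> fml set \<Rightarrow> bool" where
  "models I F \<longleftrightarrow> wf_interp I \<and> (\<forall>f\<in>F. holds I f)"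

definition conj_list :: "fml list \<Rightarrow> fml" where
  "conj_list fs = foldr Conj fs Top"

definition fresh_idx :: "trm set \<Rightarrow> fml" where
  "fresh_idx S = Ex 0 Idx
     (conj_list (map (\<lambda>k. Neg (Eq (Var 0 Idx) k)) (SOME xs. set xs = S)))"

type_synonym pimap = "trm \<Rightarrow> trm \<Rightarrow> (fml \<times> trm) option"

text \<open>Unsat, or a triple (A, I, pi); I = None is the value I_0 = none.\<close>
datatype 'u config = Unsat | Cfg "fml set" "'u interp option" pimap

definition pi0 :: pimap where "pi0 = (\<lambda>_ _. None)"

definition initial :: "fml set \<Rightarrow> 'u config" where
  "initial A = Cfg A None pi0"

definition base :: "trm \<Rightarrow> trm \<Rightarrow> bool" where
  "base a t \<longleftrightarrow> t = a \<or> (\<exists>i. t = Read a i)"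

text \<open>The recursive definition of R(a,t), as its graph. The value () is None.
 The recursion terminates for (a,t) iff some value is related. A conjunction
 with the undefined value () is taken to be ().\<close>
inductive reason_rel :: "pimap \<Rightarrow> trm \<Rightarrow> trm \<Rightarrow> fml option \<Rightarrow> bool" for \<pi> where
  r_undef: "\<pi> a t = None \<Longrightarrow> reason_rel \<pi> a t None"
| r_base: "\<pi> a t \<noteq> None \<Longrightarrow> base a t \<Longrightarrow> reason_rel \<pi> a t (Some Top)"
| r_step: "\<pi> a t = Some (r, c) \<Longrightarrow> \<not> base a t \<Longrightarrow> reason_rel \<pi> c t v \<Longrightarrow>
             reason_rel \<pi> a t (map_option (\<lambda>\<rho>. Conj \<rho> r) v)"

inductive depth_rel :: "pimap \<Rightarrow> trm \<Rightarrow> trm \<Rightarrow> nat \<Rightarrow> bool" for \<pi> where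
  d_undef: "\<pi> a t = None \<Longrightarrow> depth_rel \<pi> a t 0"
| d_base: "\<pi> a t \<noteq> None \<Longrightarrow> base a t \<Longrightarrow> depth_rel \<pi> a t 1"
| d_step: "\<pi> a t = Some (r, c) \<Longrightarrow> \<not> base a t \<Longrightarrow> depth_rel \<pi> c t n \<Longrightarrow>
             depth_rel \<pi> a t (Suc n)"

definition reason :: "pimap \<Rightarrow> trm \<Rightarrow> trm \<Rightarrow> fml option" where
  "reason \<pi> a t = (THE v. reason_rel \<pi> a t v)"

definition depth :: "pimap \<Rightarrow> trm \<Rightarrow> trm \<Rightarrow> nat" where
  "depth \<pi> a t = (THE n. depth_rel \<pi> a t n)"

text \<open>Updated indices I(a,<v>), as the graph of its recursive definition
 (value () is None; the union of () with {j} is ()).\<close>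
inductive upd_rel :: "pimap \<Rightarrow> trm \<Rightarrow> trm \<Rightarrow> trm set option \<Rightarrow> bool" for \<pi> where
  u_undef: "\<pi> a (CArr v) = None \<Longrightarrow> upd_rel \<pi> a v None"
| u_base: "\<pi> a (CArr v) \<noteq> None \<Longrightarrow> a = CArr v \<Longrightarrow> upd_rel \<pi> a v (Some {})"
| u_write: "\<pi> a (CArr v) = Some (Top, b) \<Longrightarrow> a \<noteq> CArr v \<Longrightarrow>
             b = Write a j u \<or> a = Write b j u \<Longrightarrow> upd_rel \<pi> b v X \<Longrightarrow>
             upd_rel \<pi> a v (map_option (insert j) X)"
| u_other: "\<pi> a (CArr v) = Some (r, c) \<Longrightarrow> a \<noteq> CArr v \<Longrightarrow>
             \<not> (r = Top \<and> (\<exists>j u. c = Write a j u \<or> a = Write c j u)) \<Longrightarrow>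
             upd_rel \<pi> c v X \<Longrightarrow> upd_rel \<pi> a v X"

inductive nc_step :: "'u config \<Rightarrow> 'u config \<Rightarrow> bool" where
  Interp: "models I' (A \<union> W A) \<Longrightarrow> nc_step (Cfg A None \<pi>) (Cfg A (Some I') \<pi>)"
| Conf: "\<not> (\<exists>I'::'u interp. models I' (A \<union> W A)) \<Longrightarrow> nc_step (Cfg A I \<pi>) Unsat"
| InitR: "Read a i \<in> T A \<Longrightarrow>
     nc_step (Cfg A I \<pi>) (Cfg A I (\<pi>(a := (\<pi> a)(Read a i := Some (Top, a)))))"
| InitW: "s = Write a i u \<Longrightarrow> s \<in> T A \<Longrightarrow>
     nc_step (Cfg A I \<pi>) (Cfg A I (\<pi>(s := (\<pi> s)(Read s i := Some (Top, s)))))"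
| RowD: "holds I0 (Neg (Eq i j)) \<Longrightarrow> \<pi> (Write a j u) (Read b i) \<noteq> None \<Longrightarrow>
     \<pi> a (Read b i) = None \<Longrightarrow>
     nc_step (Cfg A (Some I0) \<pi>)
       (Cfg A (Some I0) (\<pi>(a := (\<pi> a)(Read b i := Some (Neg (Eq i j), Write a j u)))))"
| RowU: "holds I0 (Neg (Eq i j)) \<Longrightarrow> Write a j u \<in> T A \<Longrightarrow> \<pi> a (Read b i) \<noteq> None \<Longrightarrow>
     \<pi> (Write a j u) (Read b i) = None \<Longrightarrow>
     nc_step (Cfg A (Some I0) \<pi>)
       (Cfg A (Some I0) (\<pi>(Write a j u := (\<pi> (Write a j u))(Read b i := Some (Neg (Eq i j), a)))))"
| EqR: "holds I0 (Eq a c) \<Longrightarrow> a \<in> TA A \<Longrightarrow> c \<in> TA A \<Longrightarrow> Eq a c \<in> atoms A \<Longrightarrow>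
     \<pi> a (Read b i) \<noteq> None \<Longrightarrow> \<pi> c (Read b i) = None \<Longrightarrow>
     nc_step (Cfg A (Some I0) \<pi>)
       (Cfg A (Some I0) (\<pi>(c := (\<pi> c)(Read b i := Some (Eq a c, a)))))"
| EqL: "holds I0 (Eq a c) \<Longrightarrow> a \<in> TA A \<Longrightarrow> c \<in> TA A \<Longrightarrow> Eq a c \<in> atoms A \<Longrightarrow>
     \<pi> c (Read b i) \<noteq> None \<Longrightarrow> \<pi> a (Read b i) = None \<Longrightarrow>
     nc_step (Cfg A (Some I0) \<pi>)
       (Cfg A (Some I0) (\<pi>(a := (\<pi> a)(Read b i := Some (Eq a c, c)))))"
| InitC: "CArr v \<in> T A \<Longrightarrow>
     nc_step (Cfg A I \<pi>) (Cfg A I (\<pi>(CArr v := (\<pi> (CArr v))(CArr v := Some (Top, CArr v)))))"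
| CowD: "\<pi> (Write a j u) (CArr v) \<noteq> None \<Longrightarrow> \<pi> a (CArr v) = None \<Longrightarrow>
     upd_rel \<pi> (Write a j u) v (Some S) \<Longrightarrow> holds I0 (fresh_idx (S \<union> {j})) \<Longrightarrow>
     nc_step (Cfg A (Some I0) \<pi>)
       (Cfg A (Some I0) (\<pi>(a := (\<pi> a)(CArr v := Some (Top, Write a j u)))))"
| CowU: "\<pi> a (CArr v) \<noteq> None \<Longrightarrow> \<pi> (Write a j u) (CArr v) = None \<Longrightarrow>
     Write a j u \<in> T A \<Longrightarrow>
     upd_rel \<pi> a v (Some S) \<Longrightarrow> holds I0 (fresh_idx (S \<union> {j})) \<Longrightarrow>
     nc_step (Cfg A (Some I0) \<pi>)
       (Cfg A (Some I0) (\<pi>(Write a j u := (\<pi> (Write a j u))(CArr v := Some (Top, a)))))"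
| CEqR: "holds I0 (Eq a c) \<Longrightarrow> a \<in> TA A \<Longrightarrow> c \<in> TA A \<Longrightarrow> Eq a c \<in> atoms A \<Longrightarrow>
     \<pi> a (CArr v) \<noteq> None \<Longrightarrow> \<pi> c (CArr v) = None \<Longrightarrow>
     nc_step (Cfg A (Some I0) \<pi>)
       (Cfg A (Some I0) (\<pi>(c := (\<pi> c)(CArr v := Some (Eq a c, a)))))"
| CEqL: "holds I0 (Eq a c) \<Longrightarrow> a \<in> TA A \<Longrightarrow> c \<in> TA A \<Longrightarrow> Eq a c \<in> atoms A \<Longrightarrow>
     \<pi> c (CArr v) \<noteq> None \<Longrightarrow> \<pi> a (CArr v) = None \<Longrightarrow>
     nc_step (Cfg A (Some I0) \<pi>)
       (Cfg A (Some I0) (\<pi>(a := (\<pi> a)(CArr v := Some (Eq a c, c)))))"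

inductive c_step :: "'u config \<Rightarrow> 'u config \<Rightarrow> bool" where
  CongR: "holds I0 (Eq i k) \<Longrightarrow> \<pi> a (Read b i) \<noteq> None \<Longrightarrow> \<pi> a (Read c k) \<noteq> None \<Longrightarrow>
     holds I0 (Neg (Eq (Read b i) (Read c k))) \<Longrightarrow>
     reason_rel \<pi> a (Read b i) (Some \<rho>1) \<Longrightarrow> reason_rel \<pi> a (Read c k) (Some \<rho>2) \<Longrightarrow>
     c_step (Cfg A (Some I0) \<pi>)
       (Cfg (insert (Imp (Conj (Conj \<rho>1 \<rho>2) (Eq i k)) (Eq (Read b i) (Read c k))) A) None pi0)"
| DisEq: "holds I0 (Neg (Eq a c)) \<Longrightarrow> a \<in> TA A \<Longrightarrow> c \<in> TA A \<Longrightarrow> Eq a c \<in> atoms A \<Longrightarrow>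
     K {|a, c|} \<notin> T A \<Longrightarrow>
     c_step (Cfg A (Some I0) \<pi>)
       (Cfg (insert (Imp (Neg (Eq a c))
                 (Neg (Eq (Read a (K {|a, c|})) (Read c (K {|a, c|}))))) A) None pi0)"
| Roc: "\<pi> (CArr v) (Read b i) \<noteq> None \<Longrightarrow> holds I0 (Neg (Eq (Read b i) v)) \<Longrightarrow>
     reason_rel \<pi> (CArr v) (Read b i) (Some \<rho>) \<Longrightarrow>
     c_step (Cfg A (Some I0) \<pi>) (Cfg (insert (Imp \<rho> (Eq (Read b i) v)) A) None pi0)"
| CongC: "\<pi> a (CArr v) \<noteq> None \<Longrightarrow> \<pi> a (CArr w) \<noteq> None \<Longrightarrow> holds I0 (Neg (Eq v w)) \<Longrightarrow>
     upd_rel \<pi> a v (Some S1) \<Longrightarrow> upd_rel \<pi> a w (Some S2) \<Longrightarrow>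
     holds I0 (fresh_idx (S1 \<union> S2)) \<Longrightarrow>
     reason_rel \<pi> a (CArr v) (Some \<rho>1) \<Longrightarrow> reason_rel \<pi> a (CArr w) (Some \<rho>2) \<Longrightarrow>
     c_step (Cfg A (Some I0) \<pi>)
       (Cfg (insert (Imp (Conj (Conj \<rho>1 \<rho>2) (fresh_idx (S1 \<union> S2))) (Eq v w)) A) None pi0)"

definition step :: "'u config \<Rightarrow> 'u config \<Rightarrow> bool" where
  "step C C' \<longleftrightarrow> nc_step C C' \<or> c_step C C'"

definition derivation :: "fml set \<Rightarrow> 'u config list \<Rightarrow> bool" where
  "derivation A cs \<longleftrightarrow> cs \<noteq> [] \<and> hd cs = initial A \<and>
     (\<forall>k. Suc k < length cs \<longrightarrow> step (cs ! k) (cs ! Suc k))"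

definition input_ok :: "fml set \<Rightarrow> bool" where
  "input_ok A \<longleftrightarrow> (\<forall>f\<in>A. wellsorted f \<and> quantifier_free f \<and> flat_literals f)"

definition propagated :: "trm \<Rightarrow> bool" where
  "propagated t \<longleftrightarrow> (\<exists>b i. t = Read b i) \<or> (\<exists>v. t = CArr v)"

end

theory Submission
  imports Defs
begin

(* For a fixed propagated term t, the entries pi(a,t) = (r,c) with t neither a nor a read of a
   are pointers a -> c, and the recursions for R(a,t) and |R(a,t)| follow them.  A non-conflict
   rule either (re)sets a base entry, which the recursion never follows, or gives an undefined
   entry a pointer to a defined one; so the pointers stay ranked by a natural number decreasing
   along them and every chain of defined entries ends in a base entry.  Conflict rules reset pi
   to pi0.  Hence both recursions terminate on every derivation, and since a non-conflict rule
   changes no defined non-base entry, it preserves every reason that is already defined. *)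

lemma reason_rel_unique:
  "reason_rel \<pi> a t v \<Longrightarrow> reason_rel \<pi> a t w \<Longrightarrow> v = w"
proof (induction arbitrary: w rule: reason_rel.induct)
  case (r_undef a t)
  from r_undef.prems show ?case by cases (use r_undef.hyps in simp_all)
next
  case (r_base a t)
  from r_base.prems show ?case by cases (use r_base.hyps in simp_all)
next
  case (r_step a t r c v)
  from r_step.prems show ?case
  proof cases
    case (r_step r' c' v')
    then show ?thesis using r_step.hyps r_step.IH by simp
  qed (use r_step.hyps in simp_all)
qed

lemma depth_rel_unique:
  "depth_rel \<pi> a t m \<Longrightarrow> depth_rel \<pi> a t n \<Longrightarrow> m = n"
proof (induction arbitrary: n rule: depth_rel.induct)
  case (d_undef a t)
  from d_undef.prems show ?case by cases (use d_undef.hyps in simp_all)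
next
  case (d_base a t)
  from d_base.prems show ?case by cases (use d_base.hyps in simp_all)
next
  case (d_step a t r c m)
  from d_step.prems show ?case
  proof cases
    case (d_step r' c' n')
    then show ?thesis using d_step.hyps d_step.IH by simp
  qed (use d_step.hyps in simp_all)
qed

lemma reason_eqI: "reason_rel \<pi> a t v \<Longrightarrow> reason \<pi> a t = v"
  unfolding reason_def by (blast intro: the_equality reason_rel_unique)

lemma depth_eqI: "depth_rel \<pi> a t n \<Longrightarrow> depth \<pi> a t = n"
  unfolding depth_def by (blast intro: the_equality depth_rel_unique)

definition ranked_by :: "(trm \<Rightarrow> trm \<Rightarrow> nat) \<Rightarrow> pimap \<Rightarrow> bool" where
  "ranked_by f \<pi> \<longleftrightarrow> (\<forall>a t r c. \<pi> a t = Some (r, c) \<longrightarrow> \<not> base a t \<longrightarrow>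
     \<pi> c t \<noteq> None \<and> f c t < f a t)"

definition wf_pimap :: "pimap \<Rightarrow> bool" where
  "wf_pimap \<pi> \<longleftrightarrow> (\<exists>f. ranked_by f \<pi>)"

lemma ranked_by_reason_depth_defined:
  assumes "ranked_by f \<pi>" and "\<pi> a t \<noteq> None"
  shows "\<exists>\<rho> n. reason_rel \<pi> a t (Some \<rho>) \<and> depth_rel \<pi> a t n"
  using assms(2)
proof (induction "f a t" arbitrary: a rule: less_induct)
  case less
  show ?case
  proof (cases "base a t")
    case True
    then show ?thesis using less.prems by (blast intro: r_base d_base)
  next
    case False
    obtain r c where rc: "\<pi> a t = Some (r, c)" using less.prems by auto
    with False assms(1) have "\<pi> c t \<noteq> None" "f c t < f a t"
      unfolding ranked_by_def by blast+
    then obtain \<rho> n where "reason_rel \<pi> c t (Some \<rho>)" "depth_rel \<pi> c t n"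
      using less.hyps by blast
    then show ?thesis using r_step[of \<pi>, OF rc False] d_step[of \<pi>, OF rc False] by fastforce
  qed
qed

lemma wf_pimap_reason_depth_total:
  assumes "wf_pimap \<pi>"
  shows "(\<exists>v. reason_rel \<pi> a t v) \<and> (\<exists>n. depth_rel \<pi> a t n)"
proof (cases "\<pi> a t = None")
  case True
  then show ?thesis by (blast intro: r_undef d_undef)
next
  case False
  then show ?thesis
    using assms ranked_by_reason_depth_defined unfolding wf_pimap_def by blast
qed

lemma wf_pimap_ex1_reason_rel: "wf_pimap \<pi> \<Longrightarrow> \<exists>!v. reason_rel \<pi> a t v"
  using wf_pimap_reason_depth_total reason_rel_unique by blast

lemma wf_pimap_ex1_depth_rel: "wf_pimap \<pi> \<Longrightarrow> \<exists>!n. depth_rel \<pi> a t n"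
  using wf_pimap_reason_depth_total depth_rel_unique by blast

lemma wf_pimap_reason_None_iff:
  assumes "wf_pimap \<pi>"
  shows "reason \<pi> a t = None \<longleftrightarrow> \<pi> a t = None"
proof (cases "\<pi> a t = None")
  case True
  then show ?thesis by (simp add: r_undef reason_eqI)
next
  case False
  with assms obtain \<rho> where "reason_rel \<pi> a t (Some \<rho>)"
    using ranked_by_reason_depth_defined unfolding wf_pimap_def by blast
  then show ?thesis using False by (simp add: reason_eqI)
qed

lemma wf_pimap_pi0: "wf_pimap pi0"
  unfolding wf_pimap_def ranked_by_def pi0_def by simp

lemma wf_pimap_update_base:
  assumes "wf_pimap \<pi>" and "base x s"
  shows "wf_pimap (\<pi>(x := (\<pi> x)(s := Some e)))"
proof -
  from assms(1) obtain f where "ranked_by f \<pi>" unfolding wf_pimap_def by blast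
  with assms(2) have "ranked_by f (\<pi>(x := (\<pi> x)(s := Some e)))"
    unfolding ranked_by_def by auto
  then show ?thesis unfolding wf_pimap_def by blast
qed

lemma wf_pimap_update_undefined:
  assumes "wf_pimap \<pi>" and "\<pi> x s = None" and "\<pi> c0 s \<noteq> None"
  shows "wf_pimap (\<pi>(x := (\<pi> x)(s := Some (r0, c0))))"
proof -
  from assms(1) obtain f where f: "ranked_by f \<pi>" unfolding wf_pimap_def by blast
  define \<pi>' where "\<pi>' = \<pi>(x := (\<pi> x)(s := Some (r0, c0)))"
  define g where "g = f(x := (f x)(s := Suc (f c0 s)))"
  have "ranked_by g \<pi>'"
    unfolding ranked_by_def
  proof (intro allI impI)
    fix a t r c
    assume upd: "\<pi>' a t = Some (r, c)" and "\<not> base a t"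
    show "\<pi>' c t \<noteq> None \<and> g c t < g a t"
    proof (cases "a = x \<and> t = s")
      case True
      with upd assms(2,3) show ?thesis by (auto simp: \<pi>'_def g_def)
    next
      case False
      with upd have "\<pi> a t = Some (r, c)" by (auto simp: \<pi>'_def split: if_splits)
      with f \<open>\<not> base a t\<close> have "\<pi> c t \<noteq> None" "f c t < f a t"
        unfolding ranked_by_def by blast+
      moreover from this(1) assms(2) have "\<not> (c = x \<and> t = s)" by auto
      ultimately show ?thesis using False by (auto simp: \<pi>'_def g_def)
    qed
  qed
  then show ?thesis unfolding wf_pimap_def \<pi>'_def by blast
qed

lemma nc_step_wf_pimap:
  assumes "nc_step (Cfg A I \<pi>) (Cfg A' I' \<pi>')" and "wf_pimap \<pi>"
  shows "wf_pimap \<pi>'"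
  using assms(1)
proof (cases rule: nc_step.cases)
  case (InitR a i)
  then show ?thesis using assms(2) by (simp add: wf_pimap_update_base base_def)
next
  case (InitW s a i u)
  then show ?thesis using assms(2) by (simp add: wf_pimap_update_base base_def)
next
  case (InitC v)
  then show ?thesis using assms(2) by (simp add: wf_pimap_update_base base_def)
qed (use assms(2) in \<open>auto intro!: wf_pimap_update_undefined\<close>)

fun wf_config :: "'u config \<Rightarrow> bool" where
  "wf_config Unsat = True"
| "wf_config (Cfg A I \<pi>) = wf_pimap \<pi>"

lemma step_wf_config:
  assumes "step C C'" and "wf_config C"
  shows "wf_config C'"
proof (cases C')
  case (Cfg A' I' \<pi>')
  consider "nc_step C C'" | "c_step C C'" using assms(1) unfolding step_def by blast
  then show ?thesis
  proof cases
    case 1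
    then obtain A I \<pi> where "C = Cfg A I \<pi>" by (cases rule: nc_step.cases) auto
    with 1 Cfg assms(2) show ?thesis using nc_step_wf_pimap by auto
  next
    case 2
    then show ?thesis by (cases rule: c_step.cases) (auto simp: wf_pimap_pi0)
  qed
qed simp

lemma derivation_wf_config:
  assumes "derivation A cs" and "k < length cs"
  shows "wf_config (cs ! k)"
  using assms(2)
proof (induction k)
  case 0
  with assms(1) show ?case
    by (auto simp: derivation_def initial_def hd_conv_nth wf_pimap_pi0)
next
  case (Suc k)
  with assms(1) show ?case using step_wf_config unfolding derivation_def by auto
qed

definition extends_off_base :: "pimap \<Rightarrow> pimap \<Rightarrow> bool" where
  "extends_off_base \<pi> \<pi>' \<longleftrightarrow> (\<forall>a t. \<pi> a t \<noteq> None \<longrightarrow>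
     \<pi>' a t \<noteq> None \<and> (\<not> base a t \<longrightarrow> \<pi>' a t = \<pi> a t))"

lemma extends_off_base_update:
  "\<pi> x s = None \<or> base x s \<Longrightarrow> extends_off_base \<pi> (\<pi>(x := (\<pi> x)(s := Some e)))"
  unfolding extends_off_base_def by auto

lemma nc_step_extends_off_base:
  assumes "nc_step (Cfg A I \<pi>) (Cfg A' I' \<pi>')"
  shows "extends_off_base \<pi> \<pi>'"
  using assms
proof (cases rule: nc_step.cases)
  case (Interp I0)
  then show ?thesis by (simp add: extends_off_base_def)
qed (auto intro!: extends_off_base_update simp: base_def)

lemma extends_off_base_reason_depth:
  assumes "reason_rel \<pi> a t v" and "v \<noteq> None" and "depth_rel \<pi> a t n"
    and "extends_off_base \<pi> \<pi>'"
  shows "reason_rel \<pi>' a t v \<and> depth_rel \<pi>' a t n"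
  using assms(1-3)
proof (induction arbitrary: n rule: reason_rel.induct)
  case (r_undef a t)
  then show ?case by simp
next
  case (r_base a t)
  then have "n = 1" by (auto elim: depth_rel.cases)
  moreover from r_base.hyps assms(4) have "\<pi>' a t \<noteq> None"
    unfolding extends_off_base_def by blast
  ultimately show ?case using r_base.hyps by (blast intro: reason_rel.r_base depth_rel.d_base)
next
  case (r_step a t r c v)
  from r_step.prems r_step.hyps(1,2) obtain m where "n = Suc m" "depth_rel \<pi> c t m"
    by (auto elim: depth_rel.cases)
  moreover from r_step.hyps(1,2) assms(4) have "\<pi>' a t = Some (r, c)"
    unfolding extends_off_base_def by auto
  ultimately show ?case
    using r_step.IH r_step.prems(1) r_step.hyps(2)
      reason_rel.r_step[of \<pi>' a t r c] depth_rel.d_step[of \<pi>' a t r c]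
    by auto
qed

theorem mainTheorem3:
  fixes A B :: "fml set" and cs :: "'u config list" and I :: "'u interp option"
    and \<pi> :: pimap
  assumes "input_ok A"
    and "derivation A cs"
    and "last cs = Cfg B I \<pi>"
  shows "\<forall>a t. sort_of a = Some Arr \<and> propagated t \<longrightarrow>
     (\<comment> \<open>(i)\<close>
      (\<forall>B' I' \<pi>' \<rho> n. 2 \<le> length cs \<and> cs ! (length cs - 2) = Cfg B' I' \<pi>' \<and>
          nc_step (cs ! (length cs - 2)) (last cs) \<and>
          reason_rel \<pi>' a t (Some \<rho>) \<and> depth_rel \<pi>' a t n
        \<longrightarrow> reason \<pi> a t = Some \<rho> \<and> depth \<pi> a t = n)) \<and>
     (\<comment> \<open>(ii)\<close> \<exists>!v. reason_rel \<pi> a t v) \<and>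
     (\<comment> \<open>(iii)\<close> \<exists>!n. depth_rel \<pi> a t n) \<and>
     (\<comment> \<open>(iv)\<close> reason \<pi> a t = None \<longleftrightarrow> \<pi> a t = None)"
proof (intro allI impI conjI)
  have "cs \<noteq> []" using assms(2) by (simp add: derivation_def)
  then have "wf_config (last cs)"
    using derivation_wf_config[OF assms(2), of "length cs - 1"] by (simp add: last_conv_nth)
  then have wf: "wf_pimap \<pi>" using assms(3) by simp
  fix a t
  show "\<exists>!v. reason_rel \<pi> a t v" using wf by (rule wf_pimap_ex1_reason_rel)
  show "\<exists>!n. depth_rel \<pi> a t n" using wf by (rule wf_pimap_ex1_depth_rel)
  show "reason \<pi> a t = None \<longleftrightarrow> \<pi> a t = None" using wf by (rule wf_pimap_reason_None_iff)
  fix B' I' \<pi>' \<rho> n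
  assume prev: "2 \<le> length cs \<and> cs ! (length cs - 2) = Cfg B' I' \<pi>' \<and>
    nc_step (cs ! (length cs - 2)) (last cs) \<and>
    reason_rel \<pi>' a t (Some \<rho>) \<and> depth_rel \<pi>' a t n"
  with assms(3) have "nc_step (Cfg B' I' \<pi>') (Cfg B I \<pi>)" by auto
  then have "extends_off_base \<pi>' \<pi>" by (rule nc_step_extends_off_base)
  with prev have "reason_rel \<pi> a t (Some \<rho>) \<and> depth_rel \<pi> a t n"
    using extends_off_base_reason_depth[of \<pi>' a t "Some \<rho>" n \<pi>] by simp
  then show "reason \<pi> a t = Some \<rho>" and "depth \<pi> a t = n"
    by (simp_all add: reason_eqI depth_eqI)
qed

end
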